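(* Let $D$ be a lower bounded distributive lattice. Then $M(D_\infty)\cong M(D)\oplus\mathbb{Z}$, where the splitting is induced by the natural homomorphisms $D\to D_\infty\to\mathbf{2}$ and $\mathbf{2}\to D_\infty$.
   Context: For a lower bounded distributive lattice $D$, $D_\infty$ is the bounded distributive lattice obtained by adjoining a new top element $\infty$. $\mathbf{2}=\{0\le 1\}$; the map $D_\infty\to\mathbf{2}$ sends every element other than $\infty$ to $0$ and $\infty$ to $1$, and $\mathbf{2}\to D_\infty$ sends $0\mapsto 0$, $1\mapsto\infty$. The module of motives $M(D)$ is $\mathbb{Z}[D]$ modulo $[0]=0$ and $[U]+[V]=[U\vee V]+[U\wedge V]$, functorial in lattice homomorphisms preserving $0$. *)

theory Defs
  imports "HOL-Algebra.Free_Abelian_Groups" "HOL-Algebra.Elementary_Groups"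
begin

datatype 'a withtop = Fin 'a | Infty

instantiation withtop :: (order) order
begin
fun less_eq_withtop :: "'a withtop \<Rightarrow> 'a withtop \<Rightarrow> bool" where
  "less_eq_withtop (Fin x) (Fin y) = (x \<le> y)"
| "less_eq_withtop _ Infty = True"
| "less_eq_withtop Infty (Fin _) = False"
definition less_withtop :: "'a withtop \<Rightarrow> 'a withtop \<Rightarrow> bool" where
  "less_withtop x y = (x \<le> y \<and> \<not> y \<le> x)"
instance
proof
  fix x y z :: "'a withtop"
  show "(x < y) = (x \<le> y \<and> \<not> y \<le> x)" by (simp add: less_withtop_def)
  show "x \<le> x" by (cases x) auto
  show "x \<le> y \<Longrightarrow> y \<le> z \<Longrightarrow> x \<le> z"
    by (cases x; cases y; cases z) auto
  show "x \<le> y \<Longrightarrow> y \<le> x \<Longrightarrow> x = y"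
    by (cases x; cases y) auto
qed
end

instantiation withtop :: (lattice) lattice
begin
fun sup_withtop :: "'a withtop \<Rightarrow> 'a withtop \<Rightarrow> 'a withtop" where
  "sup_withtop (Fin x) (Fin y) = Fin (sup x y)"
| "sup_withtop _ _ = Infty"
fun inf_withtop :: "'a withtop \<Rightarrow> 'a withtop \<Rightarrow> 'a withtop" where
  "inf_withtop (Fin x) (Fin y) = Fin (inf x y)"
| "inf_withtop (Fin x) Infty = Fin x"
| "inf_withtop Infty y = y"
instance
proof
  fix x y z :: "'a withtop"
  show "inf x y \<le> x" by (cases x; cases y) auto
  show "inf x y \<le> y" by (cases x; cases y) auto
  show "x \<le> y \<Longrightarrow> x \<le> z \<Longrightarrow> x \<le> inf y z" by (cases x; cases y; cases z) auto
  show "x \<le> sup x y" by (cases x; cases y) auto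
  show "y \<le> sup x y" by (cases x; cases y) auto
  show "y \<le> x \<Longrightarrow> z \<le> x \<Longrightarrow> sup y z \<le> x" by (cases x; cases y; cases z) auto
qed
end

instance withtop :: (distrib_lattice) distrib_lattice
proof
  fix x y z :: "'a withtop"
  show "sup x (inf y z) = inf (sup x y) (sup x z)"
    by (cases x; cases y; cases z) (auto simp: sup_inf_distrib1)
qed

instantiation withtop :: (order_bot) order_bot
begin
definition bot_withtop :: "'a withtop" where "bot_withtop = Fin bot"
instance by standard (case_tac a; simp add: bot_withtop_def)
end

definition motive_rels :: "('a::{distrib_lattice, order_bot} \<Rightarrow>\<^sub>0 int) set" where
  "motive_rels = {frag_of bot} \<union>
     {frag_of U + frag_of V - frag_of (sup U V) - frag_of (inf U V) | U V. True}"

definition motive_subgroup :: "('a::{distrib_lattice, order_bot} \<Rightarrow>\<^sub>0 int) set" where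
  "motive_subgroup = generate (free_Abelian_group UNIV) motive_rels"

definition motives :: "(('a::{distrib_lattice, order_bot} \<Rightarrow>\<^sub>0 int) set) monoid" where
  "motives = free_Abelian_group UNIV Mod motive_subgroup"

definition motive_map ::
  "('a::{distrib_lattice, order_bot} \<Rightarrow> 'b::{distrib_lattice, order_bot})
     \<Rightarrow> ('a \<Rightarrow>\<^sub>0 int) set \<Rightarrow> ('b \<Rightarrow>\<^sub>0 int) set" where
  "motive_map f C =
     (\<Union>x\<in>C. motive_subgroup #>\<^bsub>free_Abelian_group UNIV\<^esub> frag_extend (frag_of \<circ> f) x)"

text \<open>The natural maps D \<rightarrow> D_\<infinity>, D_\<infinity> \<rightarrow> 2 and 2 \<rightarrow> D_\<infinity> (2 is bool, False < True).\<close>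

definition to_two :: "'a withtop \<Rightarrow> bool" where
  "to_two x = (x = Infty)"

definition from_two :: "bool \<Rightarrow> 'a::order_bot withtop" where
  "from_two b = (if b then Infty else Fin bot)"

end

theory Submission
  imports Defs
begin

text \<open>Each motive relation of \<open>D\<^sub>\<infinity>\<close> involving \<open>\<infinity>\<close> holds trivially in the free
  abelian group (it reads \<open>[U] + [\<infinity>] = [\<infinity>] + [U]\<close> or \<open>[\<infinity>] + [\<infinity>] = [\<infinity>] + [\<infinity>]\<close>), so
  \<open>[Fin x] \<mapsto> [x]\<close>, \<open>[\<infinity>] \<mapsto> 0\<close> descends to a retraction \<open>q\<close> of \<open>i : M(D) \<rightarrow> M(D\<^sub>\<infinity>)\<close>.
  The idempotents \<open>i \<circ> q\<close> and \<open>s \<circ> p\<close> then add up to the identity: on \<open>[x]\<close> they give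
  \<open>[x]\<close> and \<open>[0] = 0\<close>, on \<open>[\<infinity>]\<close> they give \<open>0\<close> and \<open>[\<infinity>]\<close>.  Finally \<open>M(2) \<cong> \<int>\<close>,
  since the relations of \<open>2\<close> span exactly the multiples of \<open>[False] = [0]\<close>, i.e. the kernel
  of the coefficient of \<open>[True]\<close>.\<close>

lemma (in comm_group) hom_DirProd_mult:
  assumes "group A" "group C" and i: "i \<in> hom A G" and s: "s \<in> hom C G"
  shows "(\<lambda>(x, y). i x \<otimes> s y) \<in> hom (A \<times>\<times> C) G"
proof (rule homI)
  interpret A: group A by fact
  interpret C: group C by fact
  fix u v assume "u \<in> carrier (A \<times>\<times> C)" "v \<in> carrier (A \<times>\<times> C)"
  then obtain x y x' y' where uv: "u = (x, y)" "v = (x', y')"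
    and xy: "x \<in> carrier A" "y \<in> carrier C" "x' \<in> carrier A" "y' \<in> carrier C"
    by auto
  have "i (x \<otimes>\<^bsub>A\<^esub> x') \<otimes> s (y \<otimes>\<^bsub>C\<^esub> y') = (i x \<otimes> s y) \<otimes> (i x' \<otimes> s y')"
    using xy hom_in_carrier[OF i] hom_in_carrier[OF s]
    by (simp add: hom_mult[OF i] hom_mult[OF s] m_ac)
  then show "(case u \<otimes>\<^bsub>A \<times>\<times> C\<^esub> v of (x, y) \<Rightarrow> i x \<otimes> s y)
      = (case u of (x, y) \<Rightarrow> i x \<otimes> s y) \<otimes> (case v of (x, y) \<Rightarrow> i x \<otimes> s y)"
    by (simp add: uv)
qed (use hom_in_carrier[OF i] hom_in_carrier[OF s] in auto)

lemma (in comm_group) splitting_iso_DirProd: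
  assumes "group A" "group C"
    and i: "i \<in> hom A G" and s: "s \<in> hom C G" and q: "q \<in> hom G A" and p: "p \<in> hom G C"
    and qi: "\<And>x. x \<in> carrier A \<Longrightarrow> q (i x) = x"
    and qs: "\<And>y. y \<in> carrier C \<Longrightarrow> q (s y) = \<one>\<^bsub>A\<^esub>"
    and pi: "\<And>x. x \<in> carrier A \<Longrightarrow> p (i x) = \<one>\<^bsub>C\<^esub>"
    and ps: "\<And>y. y \<in> carrier C \<Longrightarrow> p (s y) = y"
    and decomp: "\<And>b. b \<in> carrier G \<Longrightarrow> i (q b) \<otimes> s (p b) = b"
  shows "(\<lambda>(x, y). i x \<otimes> s y) \<in> iso (A \<times>\<times> C) G"
proof -
  interpret A: group A by fact
  interpret C: group C by fact
  note ic = hom_in_carrier[OF i] and sc = hom_in_carrier[OF s]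
  have "bij_betw (\<lambda>(x, y). i x \<otimes> s y) (carrier (A \<times>\<times> C)) (carrier G)"
  proof (rule bij_betwI[where g = "\<lambda>b. (q b, p b)"])
    show "(\<lambda>(x, y). i x \<otimes> s y) \<in> carrier (A \<times>\<times> C) \<rightarrow> carrier G"
      by (auto simp: ic sc)
    show "(\<lambda>b. (q b, p b)) \<in> carrier G \<rightarrow> carrier (A \<times>\<times> C)"
      using hom_in_carrier[OF q] hom_in_carrier[OF p] by auto
    show "(\<lambda>b. (q b, p b)) (case z of (x, y) \<Rightarrow> i x \<otimes> s y) = z" if "z \<in> carrier (A \<times>\<times> C)" for z
      using that ic sc by (auto simp: hom_mult[OF q] hom_mult[OF p] qi qs pi ps)
    show "(case (q b, p b) of (x, y) \<Rightarrow> i x \<otimes> s y) = b" if "b \<in> carrier G" for b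
      using that decomp by simp
  qed
  then show ?thesis
    using hom_DirProd_mult[OF assms(1-4)] unfolding iso_def by blast
qed

abbreviation FG :: "('a \<Rightarrow>\<^sub>0 int) monoid" where "FG \<equiv> free_Abelian_group UNIV"

lemma subgroup_FG_zero: "subgroup S FG \<Longrightarrow> 0 \<in> S"
  using subgroup.one_closed by fastforce

lemma subgroup_FG_diff:
  assumes "subgroup S FG" "x \<in> S" "y \<in> S"
  shows "x - y \<in> S"
  using subgroup.m_closed[OF assms(1) assms(2) subgroup.m_inv_closed[OF assms(1) assms(3)]] by simp

lemma subgroup_FGI:
  assumes "0 \<in> T" and diff: "\<And>x y. x \<in> T \<Longrightarrow> y \<in> T \<Longrightarrow> x - y \<in> T"
  shows "subgroup T FG"
proof (rule group.subgroupI[OF group_free_Abelian_group])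
  show "inv\<^bsub>FG\<^esub> a \<in> T" if "a \<in> T" for a
    using diff[OF \<open>0 \<in> T\<close> that] by simp
  show "a \<otimes>\<^bsub>FG\<^esub> b \<in> T" if "a \<in> T" "b \<in> T" for a b
    using diff[OF that(1) diff[OF \<open>0 \<in> T\<close> that(2)]] by simp
qed (use assms in auto)

lemma frag_extend_in_subgroup:
  assumes "subgroup T FG" "\<And>x. g x \<in> T"
  shows "frag_extend g c \<in> T"
  using subset_UNIV
  by (induction c rule: frag_induction)
     (auto simp: frag_extend_diff assms subgroup_FG_zero subgroup_FG_diff)

lemma additive_eq_frag_extend:
  assumes diff: "\<And>a b. h (a - b) = h a - h b"
  shows "h c = frag_extend (\<lambda>x. h (frag_of x)) c"
  using subset_UNIV
proof (induction c rule: frag_induction)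
  case zero
  show ?case using diff[of 0 0] by simp
qed (simp_all add: diff frag_extend_diff)

lemma mem_r_coset_FG_iff:
  assumes "subgroup S FG"
  shows "x \<in> S #>\<^bsub>FG\<^esub> a \<longleftrightarrow> x - a \<in> S"
  using subgroup.rcos_module[OF assms group_free_Abelian_group] by simp

lemma r_coset_FG_eq_iff:
  assumes "subgroup S FG"
  shows "S #>\<^bsub>FG\<^esub> a = S #>\<^bsub>FG\<^esub> b \<longleftrightarrow> a - b \<in> S"
  using mem_r_coset_FG_iff[OF assms] group.repr_independence[OF group_free_Abelian_group _ _ assms]
    group.rcos_self[OF group_free_Abelian_group _ assms] by fastforce

lemma set_mult_r_coset_FG:
  assumes "subgroup S FG"
  shows "(S #>\<^bsub>FG\<^esub> a) <#>\<^bsub>FG\<^esub> (S #>\<^bsub>FG\<^esub> b) = S #>\<^bsub>FG\<^esub> (a + b)"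
  using normal.rcos_sum[OF comm_group.subgroup_imp_normal[OF abelian_free_Abelian_group assms]]
  by simp

definition induced_map ::
  "('b \<Rightarrow>\<^sub>0 int) set \<Rightarrow> ('a \<Rightarrow> ('b \<Rightarrow>\<^sub>0 int)) \<Rightarrow> ('a \<Rightarrow>\<^sub>0 int) set \<Rightarrow> ('b \<Rightarrow>\<^sub>0 int) set"
  where "induced_map T g C = (\<Union>x\<in>C. T #>\<^bsub>FG\<^esub> frag_extend g x)"

context
  fixes S :: "('a \<Rightarrow>\<^sub>0 int) set" and T :: "('b \<Rightarrow>\<^sub>0 int) set" and g :: "'a \<Rightarrow> ('b \<Rightarrow>\<^sub>0 int)"
  assumes S: "subgroup S FG" and T: "subgroup T FG"
    and maps_into: "\<And>x. x \<in> S \<Longrightarrow> frag_extend g x \<in> T"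
begin

lemma induced_map_r_coset: "induced_map T g (S #>\<^bsub>FG\<^esub> a) = T #>\<^bsub>FG\<^esub> frag_extend g a"
proof -
  have "T #>\<^bsub>FG\<^esub> frag_extend g x = T #>\<^bsub>FG\<^esub> frag_extend g a" if "x \<in> S #>\<^bsub>FG\<^esub> a" for x
  proof -
    have "x - a \<in> S"
      using that mem_r_coset_FG_iff[OF S] by blast
    then show ?thesis
      using maps_into[of "x - a"] r_coset_FG_eq_iff[OF T] by (simp add: frag_extend_diff)
  qed
  then have "induced_map T g (S #>\<^bsub>FG\<^esub> a) = (\<Union>x\<in>S #>\<^bsub>FG\<^esub> a. T #>\<^bsub>FG\<^esub> frag_extend g a)"
    unfolding induced_map_def by (rule SUP_cong[OF refl])
  moreover have "a \<in> S #>\<^bsub>FG\<^esub> a"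
    using mem_r_coset_FG_iff[OF S] subgroup_FG_zero[OF S] by simp
  ultimately show ?thesis
    by auto
qed

lemma induced_map_hom: "induced_map T g \<in> hom (FG Mod S) (FG Mod T)"
proof (rule homI)
  show "induced_map T g X \<in> carrier (FG Mod T)" if "X \<in> carrier (FG Mod S)" for X
    using that by (auto simp: carrier_FactGroup induced_map_r_coset)
  show "induced_map T g (X \<otimes>\<^bsub>FG Mod S\<^esub> Y) = induced_map T g X \<otimes>\<^bsub>FG Mod T\<^esub> induced_map T g Y"
    if XY: "X \<in> carrier (FG Mod S)" "Y \<in> carrier (FG Mod S)" for X Y
  proof -
    obtain a b where "X = S #>\<^bsub>FG\<^esub> a" "Y = S #>\<^bsub>FG\<^esub> b"
      using XY by (auto simp: carrier_FactGroup)
    then show ?thesis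
      by (simp add: induced_map_r_coset set_mult_r_coset_FG[OF S] set_mult_r_coset_FG[OF T]
          frag_extend_add)
  qed
qed

end

definition lattice_bot_hom ::
  "('a::{distrib_lattice, order_bot} \<Rightarrow> 'b::{distrib_lattice, order_bot}) \<Rightarrow> bool" where
  "lattice_bot_hom f \<longleftrightarrow> f bot = bot \<and> (\<forall>x y. f (sup x y) = sup (f x) (f y))
     \<and> (\<forall>x y. f (inf x y) = inf (f x) (f y))"

lemma lattice_bot_homI:
  assumes "f bot = bot" "\<And>x y. f (sup x y) = sup (f x) (f y)" "\<And>x y. f (inf x y) = inf (f x) (f y)"
  shows "lattice_bot_hom f"
  using assms by (simp add: lattice_bot_hom_def)

lemma subgroup_motive_subgroup: "subgroup motive_subgroup FG"
  unfolding motive_subgroup_def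
  by (rule group.generate_is_subgroup[OF group_free_Abelian_group]) auto

lemma frag_of_bot_in_motive_subgroup [simp]: "frag_of bot \<in> motive_subgroup"
  unfolding motive_subgroup_def motive_rels_def by (rule generate.incl) simp

lemma motive_relation_in_motive_subgroup [simp]:
  "frag_of U + frag_of V - frag_of (sup U V) - frag_of (inf U V) \<in> motive_subgroup"
  unfolding motive_subgroup_def motive_rels_def by (rule generate.incl) blast

lemma motive_subgroup_minimal:
  "subgroup T FG \<Longrightarrow> motive_rels \<subseteq> T \<Longrightarrow> motive_subgroup \<subseteq> T"
  unfolding motive_subgroup_def by (rule group.generate_subgroup_incl[OF group_free_Abelian_group])

lemma frag_extend_motive_subgroup:
  assumes "\<And>r. r \<in> motive_rels \<Longrightarrow> frag_extend g r \<in> motive_subgroup"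
    and "x \<in> motive_subgroup"
  shows "frag_extend g x \<in> motive_subgroup"
proof -
  have "subgroup {x. frag_extend g x \<in> motive_subgroup} FG"
    by (rule subgroup_FGI)
       (auto simp: frag_extend_diff subgroup_FG_zero subgroup_FG_diff subgroup_motive_subgroup)
  then show ?thesis
    using motive_subgroup_minimal assms by blast
qed

lemma lattice_bot_hom_motive_rels:
  assumes "lattice_bot_hom f" "r \<in> motive_rels"
  shows "frag_extend (frag_of \<circ> f) r \<in> motive_subgroup"
  using assms by (auto simp: motive_rels_def lattice_bot_hom_def frag_extend_add frag_extend_diff)

lemma motive_map_eq_induced_map: "motive_map f = induced_map motive_subgroup (frag_of \<circ> f)"
  by (simp add: fun_eq_iff motive_map_def induced_map_def)

lemma motive_map_r_coset:
  assumes "lattice_bot_hom f"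
  shows "motive_map f (motive_subgroup #>\<^bsub>FG\<^esub> a)
           = motive_subgroup #>\<^bsub>FG\<^esub> frag_extend (frag_of \<circ> f) a"
  unfolding motive_map_eq_induced_map
  by (rule induced_map_r_coset[OF subgroup_motive_subgroup subgroup_motive_subgroup
        frag_extend_motive_subgroup[OF lattice_bot_hom_motive_rels[OF assms]]])

lemma motive_map_hom:
  assumes "lattice_bot_hom f"
  shows "motive_map f \<in> hom motives motives"
  unfolding motive_map_eq_induced_map motives_def
  by (rule induced_map_hom[OF subgroup_motive_subgroup subgroup_motive_subgroup
        frag_extend_motive_subgroup[OF lattice_bot_hom_motive_rels[OF assms]]])

lemma carrier_motivesE:
  assumes "X \<in> carrier motives"
  obtains a where "X = motive_subgroup #>\<^bsub>FG\<^esub> a"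
  using assms by (auto simp: motives_def carrier_FactGroup)

lemma comm_group_motives: "comm_group motives"
  unfolding motives_def
  by (rule comm_group.abelian_FactGroup[OF abelian_free_Abelian_group subgroup_motive_subgroup])

lemma group_motives: "group motives"
  using comm_group_motives by (rule comm_group.axioms)

lemma r_coset_motive_subgroup_eq_one:
  "c \<in> motive_subgroup \<Longrightarrow> motive_subgroup #>\<^bsub>FG\<^esub> c = \<one>\<^bsub>motives\<^esub>"
  using subgroup.rcos_const[OF subgroup_motive_subgroup group_free_Abelian_group]
  by (simp add: motives_def)

lemma lattice_bot_hom_Fin [simp]: "lattice_bot_hom Fin"
  by (simp add: lattice_bot_hom_def bot_withtop_def)

lemma lattice_bot_hom_to_two [simp]:
  "lattice_bot_hom (to_two :: 'a::{distrib_lattice, order_bot} withtop \<Rightarrow> bool)"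
proof (rule lattice_bot_homI)
  show "to_two (sup x y) = sup (to_two x) (to_two y)" "to_two (inf x y) = inf (to_two x) (to_two y)"
    for x y :: "'a withtop"
    by (cases x; cases y; simp add: to_two_def)+
qed (simp add: to_two_def bot_withtop_def)

lemma lattice_bot_hom_from_two [simp]:
  "lattice_bot_hom (from_two :: bool \<Rightarrow> 'a::{distrib_lattice, order_bot} withtop)"
proof (rule lattice_bot_homI)
  show "from_two (sup x y) = (sup (from_two x) (from_two y) :: 'a withtop)"
    "from_two (inf x y) = (inf (from_two x) (from_two y) :: 'a withtop)" for x y
    by (cases x; cases y; simp add: from_two_def)+
qed (simp add: from_two_def bot_withtop_def)

definition finite_part :: "'a withtop \<Rightarrow> ('a \<Rightarrow>\<^sub>0 int)" where
  "finite_part u = (case u of Fin x \<Rightarrow> frag_of x | Infty \<Rightarrow> 0)"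

lemma finite_part_simps [simp]: "finite_part (Fin x) = frag_of x" "finite_part Infty = 0"
  by (simp_all add: finite_part_def)

lemma finite_part_motive_rels:
  assumes "r \<in> (motive_rels :: ('a::{distrib_lattice, order_bot} withtop \<Rightarrow>\<^sub>0 int) set)"
  shows "frag_extend finite_part r \<in> (motive_subgroup :: ('a \<Rightarrow>\<^sub>0 int) set)"
proof -
  have "frag_extend finite_part (frag_of U + frag_of V - frag_of (sup U V) - frag_of (inf U V))
          \<in> (motive_subgroup :: ('a \<Rightarrow>\<^sub>0 int) set)" for U V :: "'a withtop"
    by (cases U; cases V)
       (simp_all add: frag_extend_add frag_extend_diff subgroup_FG_zero subgroup_motive_subgroup)
  then show ?thesis
    using assms by (auto simp: motive_rels_def bot_withtop_def)
qed

definition motive_retraction ::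
  "('a::{distrib_lattice, order_bot} withtop \<Rightarrow>\<^sub>0 int) set \<Rightarrow> ('a \<Rightarrow>\<^sub>0 int) set" where
  "motive_retraction = induced_map motive_subgroup finite_part"

lemma motive_retraction_r_coset:
  "motive_retraction (motive_subgroup #>\<^bsub>FG\<^esub> c) = motive_subgroup #>\<^bsub>FG\<^esub> frag_extend finite_part c"
  unfolding motive_retraction_def
  by (rule induced_map_r_coset[OF subgroup_motive_subgroup subgroup_motive_subgroup
        frag_extend_motive_subgroup[OF finite_part_motive_rels]])

lemma motive_retraction_hom: "motive_retraction \<in> hom motives motives"
  unfolding motive_retraction_def motives_def
  by (rule induced_map_hom[OF subgroup_motive_subgroup subgroup_motive_subgroup
        frag_extend_motive_subgroup[OF finite_part_motive_rels]])

lemma group_hom_lookup: "group_hom FG integer_group (\<lambda>c. Poly_Mapping.lookup c a)"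
  by (intro group_hom.intro group_hom_axioms.intro group_free_Abelian_group group_integer_group homI)
     (auto simp: lookup_add)

lemma kernel_lookup_True_eq_motive_subgroup:
  "kernel FG integer_group (\<lambda>c. Poly_Mapping.lookup c True) = motive_subgroup"
proof -
  interpret group_hom FG integer_group "\<lambda>c. Poly_Mapping.lookup c True"
    by (rule group_hom_lookup)
  have "motive_rels \<subseteq> kernel FG integer_group (\<lambda>c. Poly_Mapping.lookup c True)"
  proof -
    have "Poly_Mapping.lookup (frag_of U + frag_of V - frag_of (sup U V) - frag_of (inf U V)) True = 0"
      for U V :: bool
      by (cases U; cases V) (simp_all add: lookup_add lookup_minus)
    then show ?thesis
      by (auto simp: motive_rels_def kernel_def)
  qed
  then have "motive_subgroup \<subseteq> kernel FG integer_group (\<lambda>c. Poly_Mapping.lookup c True)"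
    by (rule motive_subgroup_minimal[OF subgroup_kernel])
  moreover have "c \<in> motive_subgroup" if "Poly_Mapping.lookup c True = 0" for c :: "bool \<Rightarrow>\<^sub>0 int"
  proof -
    have "c = frag_cmul (Poly_Mapping.lookup c False) (frag_of False)"
      using that by (intro poly_mapping_eqI) (auto simp: lookup_single)
    also have "\<dots> \<in> motive_subgroup"
      using frag_of_bot_in_motive_subgroup[where 'a=bool]
      by (intro frag_closure_minus_cmul[where P = "\<lambda>x. x \<in> motive_subgroup"])
         (auto simp: subgroup_FG_zero subgroup_FG_diff subgroup_motive_subgroup)
    finally show ?thesis .
  qed
  ultimately show ?thesis
    by (auto simp: kernel_def)
qed

lemma motives_bool_iso_integer_group: "(motives :: (bool \<Rightarrow>\<^sub>0 int) set monoid) \<cong> integer_group"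
proof -
  interpret group_hom FG integer_group "\<lambda>c. Poly_Mapping.lookup c True"
    by (rule group_hom_lookup)
  have "(\<lambda>c. Poly_Mapping.lookup c True) ` carrier FG = carrier integer_group"
    by (auto intro!: image_eqI[where x = "frag_cmul _ (frag_of True)"])
  then show ?thesis
    using FactGroup_iso by (simp add: motives_def kernel_lookup_True_eq_motive_subgroup)
qed

lemma motive_retraction_motive_map_Fin:
  assumes "X \<in> carrier (motives :: ('a::{distrib_lattice, order_bot} \<Rightarrow>\<^sub>0 int) set monoid)"
  shows "motive_retraction (motive_map Fin X) = X"
proof -
  obtain a where X: "X = motive_subgroup #>\<^bsub>FG\<^esub> a"
    using assms by (rule carrier_motivesE)
  have "frag_extend (finite_part \<circ> Fin) a = frag_extend frag_of a"
    by (rule frag_extend_eq) simp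
  then show ?thesis
    by (simp add: X motive_map_r_coset motive_retraction_r_coset frag_extend_compose
        flip: frag_expansion)
qed

lemma motive_retraction_motive_map_from_two:
  assumes "Y \<in> carrier (motives :: (bool \<Rightarrow>\<^sub>0 int) set monoid)"
  shows "motive_retraction (motive_map (from_two :: bool \<Rightarrow> 'a::{distrib_lattice, order_bot} withtop) Y)
           = \<one>\<^bsub>motives\<^esub>"
proof -
  obtain b where Y: "Y = motive_subgroup #>\<^bsub>FG\<^esub> b"
    using assms by (rule carrier_motivesE)
  have "frag_extend (finite_part \<circ> from_two) b \<in> (motive_subgroup :: ('a \<Rightarrow>\<^sub>0 int) set)"
  proof (rule frag_extend_in_subgroup[OF subgroup_motive_subgroup])
    show "(finite_part \<circ> from_two) x \<in> (motive_subgroup :: ('a \<Rightarrow>\<^sub>0 int) set)" for x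
      by (cases x) (simp_all add: from_two_def subgroup_FG_zero subgroup_motive_subgroup)
  qed
  then show ?thesis
    by (simp add: Y motive_map_r_coset motive_retraction_r_coset frag_extend_compose
        r_coset_motive_subgroup_eq_one)
qed

lemma motive_map_to_two_Fin:
  assumes "X \<in> carrier (motives :: ('a::{distrib_lattice, order_bot} \<Rightarrow>\<^sub>0 int) set monoid)"
  shows "motive_map to_two (motive_map Fin X) = \<one>\<^bsub>motives\<^esub>"
proof -
  obtain a where X: "X = motive_subgroup #>\<^bsub>FG\<^esub> a"
    using assms by (rule carrier_motivesE)
  have "frag_extend (frag_of \<circ> to_two \<circ> Fin) a \<in> motive_subgroup"
    using frag_of_bot_in_motive_subgroup[where 'a=bool]
    by (intro frag_extend_in_subgroup[OF subgroup_motive_subgroup]) (simp add: to_two_def)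
  then show ?thesis
    by (simp add: X motive_map_r_coset frag_extend_compose r_coset_motive_subgroup_eq_one)
qed

lemma motive_map_to_two_from_two:
  assumes "Y \<in> carrier (motives :: (bool \<Rightarrow>\<^sub>0 int) set monoid)"
  shows "motive_map to_two (motive_map (from_two :: bool \<Rightarrow> 'a::{distrib_lattice, order_bot} withtop) Y)
           = Y"
proof -
  obtain b where Y: "Y = motive_subgroup #>\<^bsub>FG\<^esub> b"
    using assms by (rule carrier_motivesE)
  have "frag_extend (frag_of \<circ> to_two \<circ> (from_two :: bool \<Rightarrow> 'a withtop)) b = frag_extend frag_of b"
    by (rule frag_extend_eq) (simp add: to_two_def from_two_def)
  then show ?thesis
    by (simp add: Y motive_map_r_coset frag_extend_compose flip: frag_expansion)
qed

lemma motive_decomposition: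
  assumes "Z \<in> carrier (motives :: ('a::{distrib_lattice, order_bot} withtop \<Rightarrow>\<^sub>0 int) set monoid)"
  shows "motive_map Fin (motive_retraction Z) \<otimes>\<^bsub>motives\<^esub>
           motive_map (from_two :: bool \<Rightarrow> 'a withtop) (motive_map to_two Z) = Z"
proof -
  obtain c where Z: "Z = motive_subgroup #>\<^bsub>FG\<^esub> c"
    using assms by (rule carrier_motivesE)
  define h :: "('a withtop \<Rightarrow>\<^sub>0 int) \<Rightarrow> ('a withtop \<Rightarrow>\<^sub>0 int)" where
    "h v = frag_extend (frag_of \<circ> Fin) (frag_extend finite_part v)
           + frag_extend (frag_of \<circ> from_two) (frag_extend (frag_of \<circ> to_two) v) - v" for v
  have "h c = frag_extend (\<lambda>u. h (frag_of u)) c"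
    by (rule additive_eq_frag_extend) (simp add: h_def frag_extend_diff)
  also have "\<dots> \<in> motive_subgroup"
  proof (rule frag_extend_in_subgroup[OF subgroup_motive_subgroup])
    show "h (frag_of u) \<in> motive_subgroup" for u
      by (cases u) (simp_all add: h_def to_two_def from_two_def subgroup_FG_zero
          subgroup_motive_subgroup flip: bot_withtop_def)
  qed
  finally show ?thesis
    by (simp add: Z h_def motive_map_r_coset motive_retraction_r_coset motives_def
        set_mult_r_coset_FG[OF subgroup_motive_subgroup] r_coset_FG_eq_iff[OF subgroup_motive_subgroup])
qed

theorem lemma3p36:
  fixes D :: "'a::{distrib_lattice, order_bot} itself"
  defines "MD \<equiv> (motives :: ('a \<Rightarrow>\<^sub>0 int) set monoid)"
      and "MDi \<equiv> (motives :: ('a withtop \<Rightarrow>\<^sub>0 int) set monoid)"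
      and "M2 \<equiv> (motives :: (bool \<Rightarrow>\<^sub>0 int) set monoid)"
      and "i \<equiv> motive_map (Fin :: 'a \<Rightarrow> 'a withtop)"
      and "p \<equiv> motive_map (to_two :: 'a withtop \<Rightarrow> bool)"
      and "s \<equiv> motive_map (from_two :: bool \<Rightarrow> 'a withtop)"
  shows "i \<in> hom MD MDi \<and> p \<in> hom MDi M2 \<and> s \<in> hom M2 MDi
       \<and> (\<forall>x\<in>carrier MD. p (i x) = \<one>\<^bsub>M2\<^esub>)
       \<and> (\<forall>y\<in>carrier M2. p (s y) = y)
       \<and> (\<lambda>(x, y). i x \<otimes>\<^bsub>MDi\<^esub> s y) \<in> iso (MD \<times>\<times> M2) MDi
       \<and> M2 \<cong> integer_group"
proof -
  have i: "i \<in> hom MD MDi" and p: "p \<in> hom MDi M2" and s: "s \<in> hom M2 MDi"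
    unfolding assms by (simp_all add: motive_map_hom)
  have pi: "\<forall>x\<in>carrier MD. p (i x) = \<one>\<^bsub>M2\<^esub>"
    unfolding assms by (simp add: motive_map_to_two_Fin)
  have ps: "\<forall>y\<in>carrier M2. p (s y) = y"
    unfolding assms by (simp add: motive_map_to_two_from_two)
  have "(\<lambda>(x, y). i x \<otimes>\<^bsub>MDi\<^esub> s y) \<in> iso (MD \<times>\<times> M2) MDi"
    unfolding assms
    by (rule comm_group.splitting_iso_DirProd[where q = motive_retraction and p = "motive_map to_two",
          OF comm_group_motives group_motives group_motives])
       (simp_all add: motive_map_hom motive_retraction_hom motive_retraction_motive_map_Fin
         motive_retraction_motive_map_from_two motive_map_to_two_Fin motive_map_to_two_from_two
         motive_decomposition)
  then show ?thesis
    using i p s pi ps motives_bool_iso_integer_group unfolding M2_def by blast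
qed

end
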